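(* Let $f:\mathbb R^{d_x}\to\mathbb R^{d_y}$ be a $\textsc{ReLU}$+$\textsc{Step}$ network of width $d_x$ in which at least one hidden neuron uses the $\textsc{Step}$ activation. Then every level set of $f$ (i.e., every connected component of $f^{-1}(y)$ for some $y$) is unbounded unless it is empty.
   Context: $\textsc{ReLU}(x)=\max\{x,0\}$, $\textsc{Step}(x)=\mathbf 1[x\ge0]$. A $\textsc{ReLU}$+$\textsc{Step}$ network is $t_L\circ\sigma_{L-1}\circ\cdots\circ\sigma_1\circ t_1$ with affine $t_\ell:\mathbb R^{d_{\ell-1}}\to\mathbb R^{d_\ell}$ ($d_0=d_x$, $d_L=d_y$) and $\sigma_\ell$ applying to each coordinate an activation chosen per neuron from $\{\textsc{ReLU},\textsc{Step}\}$; its width is $\max\{d_1,\dots,d_{L-1}\}$. *)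

theory Defs
  imports "HOL-Analysis.Analysis"
begin

definition relu :: "real \<Rightarrow> real" where
  "relu z = max z 0"

definition step :: "real \<Rightarrow> real" where
  "step z = (if z \<ge> 0 then 1 else 0)"

definition activ :: "bool \<Rightarrow> real \<Rightarrow> real" where
  "activ s z = (if s then step z else relu z)"

text \<open>Hidden-layer outputs of a ReLU+Step network with input space 'a.
  d l is the width of layer l (l = 1..L-1).
  Components j >= d l of the returned function are irrelevant (never used).\<close>
fun hidden :: "(nat \<Rightarrow> nat) \<Rightarrow> (nat \<Rightarrow> 'a::euclidean_space) \<Rightarrow> (nat \<Rightarrow> real)
    \<Rightarrow> (nat \<Rightarrow> nat \<Rightarrow> nat \<Rightarrow> real) \<Rightarrow> (nat \<Rightarrow> nat \<Rightarrow> real) \<Rightarrow> (nat \<Rightarrow> nat \<Rightarrow> bool)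
    \<Rightarrow> nat \<Rightarrow> 'a \<Rightarrow> nat \<Rightarrow> real" where
  "hidden d A a W c s 0 x = (\<lambda>j. 0)"
| "hidden d A a W c s (Suc 0) x = (\<lambda>j. activ (s 1 j) (A j \<bullet> x + a j))"
| "hidden d A a W c s (Suc (Suc k)) x =
     (\<lambda>j. activ (s (Suc (Suc k)) j)
        ((\<Sum>i<d (Suc k). W (Suc (Suc k)) j i * hidden d A a W c s (Suc k) x i)
         + c (Suc (Suc k)) j))"

text \<open>The network t_L o sigma_{L-1} o ... o sigma_1 o t_1, with output layer
  t_L h = (\<Sum>i<d (L-1). h i *R V i) + v  (a general affine map R^{d (L-1)} -> 'b).\<close>
definition net :: "nat \<Rightarrow> (nat \<Rightarrow> nat) \<Rightarrow> (nat \<Rightarrow> 'a::euclidean_space) \<Rightarrow> (nat \<Rightarrow> real)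
    \<Rightarrow> (nat \<Rightarrow> nat \<Rightarrow> nat \<Rightarrow> real) \<Rightarrow> (nat \<Rightarrow> nat \<Rightarrow> real) \<Rightarrow> (nat \<Rightarrow> nat \<Rightarrow> bool)
    \<Rightarrow> (nat \<Rightarrow> 'b::euclidean_space) \<Rightarrow> 'b \<Rightarrow> 'a \<Rightarrow> 'b" where
  "net L d A a W c s V v x =
     (\<Sum>i<d (L - 1). hidden d A a W c s (L - 1) x i *\<^sub>R V i) + v"

definition width :: "nat \<Rightarrow> (nat \<Rightarrow> nat) \<Rightarrow> nat" where
  "width L d = Max (d ` {1..L - 1})"

end

theory Submission
  imports Defs
begin

(*
  Say that phi lifts unbounded sets at x if every unbounded path-connected set through phi x
  contains the image of an unbounded path-connected set through x.  This is preserved by composition,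
  and it holds for injective affine self-maps of R^n and for the coordinatewise ReLU: from a point
  of the nonnegative orthant, follow a path in the target set until it first reaches the boundary
  of the orthant and continue along a ray on which ReLU is constant (outside the orthant such a
  ray starts at the point itself).

  Since the width is d_x, every hidden layer maps R^{d_x} into itself.  Let m be the first layer
  that is not an injective affine map followed by ReLU; it exists because of the Step neuron.
  Its input map then lifts unbounded sets, and its output is constant along an unbounded ray in its input
  space: along the kernel of its linear part if that is nontrivial, and otherwise along the
  preimage of a ray pushing the preactivation of a Step neuron away from 0.  Lifting that ray
  gives an unbounded connected set through any point x on which the network is constant, so the
  component of x in its level set is unbounded.
*)

definition lifts_unbounded :: "('a::metric_space \<Rightarrow> 'b::metric_space) \<Rightarrow> 'a \<Rightarrow> bool" where
  "lifts_unbounded \<phi> x \<longleftrightarrow> (\<forall>K. path_connected K \<longrightarrow> \<not> bounded K \<longrightarrow> \<phi> x \<in> K \<longrightarrow>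
     (\<exists>S. path_connected S \<and> \<not> bounded S \<and> x \<in> S \<and> \<phi> ` S \<subseteq> K))"

definition level_unbounded_at :: "('a::metric_space \<Rightarrow> 'c) \<Rightarrow> 'a \<Rightarrow> bool" where
  "level_unbounded_at f x \<longleftrightarrow>
     (\<exists>S. path_connected S \<and> \<not> bounded S \<and> x \<in> S \<and> (\<forall>z\<in>S. f z = f x))"

lemma lifts_unbounded_comp:
  assumes "lifts_unbounded \<phi> x" and "lifts_unbounded \<psi> (\<phi> x)"
  shows "lifts_unbounded (\<psi> \<circ> \<phi>) x"
  unfolding lifts_unbounded_def
proof (intro allI impI)
  fix K assume "path_connected K" "\<not> bounded K" "(\<psi> \<circ> \<phi>) x \<in> K"
  then obtain T where T: "path_connected T" "\<not> bounded T" "\<phi> x \<in> T" "\<psi> ` T \<subseteq> K"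
    using assms(2) unfolding lifts_unbounded_def by auto
  then obtain S where S: "path_connected S" "\<not> bounded S" "x \<in> S" "\<phi> ` S \<subseteq> T"
    using assms(1) unfolding lifts_unbounded_def by blast
  have "(\<psi> \<circ> \<phi>) ` S \<subseteq> K"
    using S(4) T(4) by (metis image_comp image_mono subset_trans)
  with S(1-3) show "\<exists>S. path_connected S \<and> \<not> bounded S \<and> x \<in> S \<and> (\<psi> \<circ> \<phi>) ` S \<subseteq> K"
    by (intro exI [of _ S] conjI)
qed

lemma lifts_unbounded_homeomorphism:
  assumes hom: "homeomorphism UNIV UNIV \<phi> \<psi>" and bd: "\<And>S. bounded S \<Longrightarrow> bounded (\<phi> ` S)"
  shows "lifts_unbounded \<phi> x"
  unfolding lifts_unbounded_def
proof (intro allI impI)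
  fix K assume K: "path_connected K" "\<not> bounded K" "\<phi> x \<in> K"
  have "continuous_on K \<psi>"
    using homeomorphism_cont2 [OF hom] by (rule continuous_on_subset) simp
  then have "path_connected (\<psi> ` K)"
    using K(1) by (rule path_connected_continuous_image)
  moreover have im: "\<phi> ` \<psi> ` K = K"
    using homeomorphism_apply2 [OF hom] by (auto simp: image_image intro!: image_eqI)
  moreover have "\<not> bounded (\<psi> ` K)"
    using K(2) bd im by metis
  moreover have "x \<in> \<psi> ` K"
    using homeomorphism_apply1 [OF hom, of x] K(3) by (metis UNIV_I image_eqI)
  ultimately show "\<exists>S. path_connected S \<and> \<not> bounded S \<and> x \<in> S \<and> \<phi> ` S \<subseteq> K"
    by blast
qed

lemma lifts_unbounded_affine:
  fixes f :: "'a::euclidean_space \<Rightarrow> 'a"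
  assumes "linear f" and "inj f"
  shows "lifts_unbounded (\<lambda>z. f z + b) x"
proof -
  obtain g where g: "linear g" "g \<circ> f = id"
    using assms linear_injective_left_inverse by blast
  have "surj f"
    using assms linear_injective_imp_surjective by blast
  then have fg: "f (g w) = w" for w
    using g(2) by (metis comp_apply id_apply surjD)
  have gf: "g (f z) = z" for z
    using g(2) by (metis comp_apply id_apply)
  have "surj (\<lambda>z. f z + b)"
    by (rule surjI [where f = "\<lambda>w. g (w - b)"]) (simp add: fg)
  moreover have "surj (\<lambda>w. g (w - b))"
    by (rule surjI [where f = "\<lambda>z. f z + b"]) (simp add: gf)
  moreover have cf: "continuous_on UNIV f" and cg: "continuous_on UNIV g"
    using assms(1) g(1) by (simp_all add: linear_continuous_on linear_conv_bounded_linear)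
  moreover have "continuous_on UNIV (\<lambda>w. g (w - b))"
    using continuous_on_compose2 [OF cg continuous_on_diff [OF continuous_on_id continuous_on_const]]
    by blast
  ultimately have "homeomorphism UNIV UNIV (\<lambda>z. f z + b) (\<lambda>w. g (w - b))"
    unfolding homeomorphism_def using fg gf
    by (simp add: continuous_on_add [OF cf continuous_on_const])
  moreover have "bounded ((\<lambda>z. f z + b) ` S)" if "bounded S" for S
  proof -
    have "bounded ((\<lambda>w. b + w) ` f ` S)"
      using assms(1) that by (intro bounded_translation bounded_linear_image) (auto simp: linear_conv_bounded_linear)
    then show ?thesis
      by (simp add: image_image add.commute)
  qed
  ultimately show ?thesis
    by (rule lifts_unbounded_homeomorphism)
qed

lemma level_unbounded_at_comp:
  assumes "lifts_unbounded \<phi> x" and "level_unbounded_at f (\<phi> x)"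
  shows "level_unbounded_at (f \<circ> \<phi>) x"
proof -
  obtain K where K: "path_connected K" "\<not> bounded K" "\<phi> x \<in> K" "\<forall>k\<in>K. f k = f (\<phi> x)"
    using assms(2) unfolding level_unbounded_at_def by blast
  then obtain S where S: "path_connected S" "\<not> bounded S" "x \<in> S" "\<phi> ` S \<subseteq> K"
    using assms(1) unfolding lifts_unbounded_def by blast
  then have "\<forall>z\<in>S. f (\<phi> z) = f (\<phi> x)"
    using K(4) by blast
  with S(1-3) show ?thesis
    unfolding level_unbounded_at_def comp_def by blast
qed

lemma level_unbounded_at_mono:
  assumes "level_unbounded_at f x" and "\<And>z. f z = f x \<Longrightarrow> g z = g x"
  shows "level_unbounded_at g x"
proof -
  obtain S where "path_connected S" "\<not> bounded S" "x \<in> S" "\<forall>z\<in>S. f z = f x"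
    using assms(1) unfolding level_unbounded_at_def by blast
  with assms(2) show ?thesis
    unfolding level_unbounded_at_def by blast
qed

lemma unbounded_connected_component_level_set:
  assumes "level_unbounded_at f x"
  shows "\<not> bounded (connected_component_set (f -` {f x}) x)"
proof -
  obtain S where S: "path_connected S" "\<not> bounded S" "x \<in> S" "\<forall>z\<in>S. f z = f x"
    using assms unfolding level_unbounded_at_def by blast
  moreover have "S \<subseteq> f -` {f x}"
    using S(4) by blast
  ultimately have "S \<subseteq> connected_component_set (f -` {f x}) x"
    by (intro connected_component_maximal path_connected_imp_connected)
  then show ?thesis
    using S(2) bounded_subset by blast
qed

definition ray :: "'a::real_normed_vector \<Rightarrow> 'a \<Rightarrow> 'a set" where
  "ray z w = (\<lambda>t. z + t *\<^sub>R w) ` {0..}"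

lemma start_in_ray: "z \<in> ray z w"
  unfolding ray_def by (rule image_eqI [of _ _ 0]) auto

lemma path_connected_ray: "path_connected (ray z w)"
  unfolding ray_def
  by (intro path_connected_continuous_image convex_imp_path_connected continuous_intros) simp

lemma unbounded_ray:
  fixes z w :: "'a::real_normed_vector"
  assumes "w \<noteq> 0"
  shows "\<not> bounded (ray z w)"
proof
  assume "bounded (ray z w)"
  then obtain B where B: "\<And>t. t \<ge> 0 \<Longrightarrow> norm (z + t *\<^sub>R w) \<le> B"
    unfolding bounded_iff ray_def by auto
  define t where "t = (\<bar>B\<bar> + norm z + 1) / norm w"
  have "t \<ge> 0" and "norm (t *\<^sub>R w) = \<bar>B\<bar> + norm z + 1"
    using assms by (simp_all add: t_def)
  moreover have "norm (t *\<^sub>R w) \<le> norm (z + t *\<^sub>R w) + norm z"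
    by (metis add_diff_cancel_left' norm_minus_commute norm_triangle_ineq4)
  moreover have "norm (z + t *\<^sub>R w) \<le> B"
    using B \<open>t \<ge> 0\<close> .
  ultimately show False
    by linarith
qed

definition relu_vec :: "'a::euclidean_space \<Rightarrow> 'a" where
  "relu_vec z = (\<Sum>b\<in>Basis. relu (z \<bullet> b) *\<^sub>R b)"

definition nonneg_orthant :: "'a::euclidean_space set" where
  "nonneg_orthant = {z. \<forall>b\<in>Basis. 0 \<le> z \<bullet> b}"

lemma relu_vec_nonneg_orthant:
  assumes "z \<in> nonneg_orthant"
  shows "relu_vec z = z"
proof -
  have "relu_vec z = (\<Sum>b\<in>Basis. (z \<bullet> b) *\<^sub>R b)"
    using assms unfolding relu_vec_def nonneg_orthant_def relu_def
    by (intro sum.cong) (auto simp: max_def)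
  then show ?thesis
    by (simp add: euclidean_representation)
qed

lemma inner_relu_vec:
  assumes "b \<in> Basis"
  shows "relu_vec z \<bullet> b = relu (z \<bullet> b)"
  using assms by (simp add: relu_vec_def inner_sum_left inner_Basis if_distrib sum.delta cong: if_cong)

lemma relu_vec_image_ray:
  fixes z :: "'a::euclidean_space"
  assumes "b \<in> Basis" and "z \<bullet> b \<le> 0"
  shows "relu_vec ` ray z (- b) = {relu_vec z}"
proof -
  have "relu ((z - t *\<^sub>R b) \<bullet> b') = relu (z \<bullet> b')" if "t \<ge> 0" "b' \<in> Basis" for t b'
    using that assms by (cases "b' = b") (auto simp: inner_diff_left inner_Basis relu_def)
  then have "relu_vec (z - t *\<^sub>R b) = relu_vec z" if "t \<ge> 0" for t
    using that unfolding relu_vec_def by (intro sum.cong) auto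
  then have "relu_vec ` ray z (- b) \<subseteq> {relu_vec z}"
    by (auto simp: ray_def)
  then show ?thesis
    using start_in_ray [of z "- b"] by blast
qed

lemma closed_nonneg_orthant: "closed nonneg_orthant"
  unfolding nonneg_orthant_def Collect_ball_eq
  by (intro closed_INT ballI closed_Collect_le continuous_intros)

lemma frontier_nonneg_orthant:
  assumes "z \<in> frontier nonneg_orthant"
  shows "\<exists>b\<in>Basis. z \<bullet> b = 0"
proof (rule ccontr)
  assume "\<not> ?thesis"
  moreover have "z \<in> nonneg_orthant"
    using assms closed_nonneg_orthant frontier_subset_closed by blast
  ultimately have "z \<in> {z. \<forall>b\<in>Basis. 0 < z \<bullet> b}"
    unfolding nonneg_orthant_def by force
  moreover have "open {z::'a. \<forall>b\<in>Basis. 0 < z \<bullet> b}"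
    unfolding Collect_ball_eq by (intro open_INT finite_Basis ballI open_Collect_less continuous_intros)
  moreover have "{z::'a. \<forall>b\<in>Basis. 0 < z \<bullet> b} \<subseteq> nonneg_orthant"
    unfolding nonneg_orthant_def by (auto intro: less_imp_le)
  ultimately have "z \<in> interior nonneg_orthant"
    by (meson interior_maximal interior_open subsetD)
  then show False
    using assms by (simp add: frontier_def)
qed

lemma exists_lift_relu_vec_leaving_orthant:
  assumes K: "path_connected K" "u \<in> K" "k \<in> K"
    and "u \<in> nonneg_orthant" and "k \<notin> nonneg_orthant"
  shows "\<exists>S. path_connected S \<and> \<not> bounded S \<and> u \<in> S \<and> relu_vec ` S \<subseteq> K"
proof -
  obtain g where g: "path g" "path_image g \<subseteq> K" "pathstart g = u" "pathfinish g = k"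
    using K unfolding path_connected_def by blast
  obtain h where h: "path h" "pathstart h = u" "path_image h \<subseteq> path_image g \<inter> nonneg_orthant"
      "pathfinish h \<in> frontier nonneg_orthant"
    using exists_path_subpath_to_frontier_closed [OF closed_nonneg_orthant g(1)] g(3,4) assms(4,5)
    by metis
  define p where "p = pathfinish h"
  obtain b :: 'a where b: "b \<in> Basis" "p \<bullet> b = 0"
    using frontier_nonneg_orthant h(4) unfolding p_def by blast
  have p: "p \<in> path_image h"
    unfolding p_def by (rule pathfinish_in_path_image)
  define S where "S = path_image h \<union> ray p (- b)"
  have "path_connected S"
    unfolding S_def using p start_in_ray
    by (intro path_connected_Un path_connected_path_image path_connected_ray h(1)) auto
  moreover have "\<not> bounded S"
    unfolding S_def using b(1) unbounded_ray [of "- b" p] by (auto simp: bounded_Un nonzero_Basis)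
  moreover have "u \<in> S"
    unfolding S_def using h(2) pathstart_in_path_image by blast
  moreover have "relu_vec ` path_image h \<subseteq> K"
    using h(3) g(2) by (auto simp: relu_vec_nonneg_orthant subset_eq)
  moreover have "relu_vec ` ray p (- b) \<subseteq> K"
    using relu_vec_image_ray [OF b(1)] b(2) p \<open>relu_vec ` path_image h \<subseteq> K\<close> by auto
  ultimately show ?thesis
    unfolding S_def by blast
qed

lemma lifts_unbounded_relu_vec: "lifts_unbounded relu_vec u"
  unfolding lifts_unbounded_def
proof (intro allI impI)
  fix K :: "'a set" assume K: "path_connected K" "\<not> bounded K" "relu_vec u \<in> K"
  show "\<exists>S. path_connected S \<and> \<not> bounded S \<and> u \<in> S \<and> relu_vec ` S \<subseteq> K"
  proof (cases "u \<in> nonneg_orthant")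
    case False
    then obtain b :: 'a where b: "b \<in> Basis" "u \<bullet> b < 0"
      unfolding nonneg_orthant_def by (auto simp: not_le)
    then have "relu_vec ` ray u (- b) \<subseteq> K"
      using K(3) relu_vec_image_ray [of b u] by simp
    moreover have "\<not> bounded (ray u (- b))"
      using b(1) by (intro unbounded_ray) auto
    ultimately show ?thesis
      using path_connected_ray start_in_ray by blast
  next
    case True
    then have "u \<in> K"
      using K(3) relu_vec_nonneg_orthant by metis
    show ?thesis
    proof (cases "K \<subseteq> nonneg_orthant")
      case True
      then have "relu_vec ` K \<subseteq> K"
        by (auto simp: relu_vec_nonneg_orthant subset_eq)
      with K(1,2) \<open>u \<in> K\<close> show ?thesis
        by blast
    next
      case False
      with K(1) \<open>u \<in> K\<close> \<open>u \<in> nonneg_orthant\<close> show ?thesis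
        using exists_lift_relu_vec_leaving_orthant by blast
    qed
  qed
qed

locale basis_enumeration =
  fixes e :: "nat \<Rightarrow> 'a::euclidean_space"
  assumes bij_e: "bij_betw e {..<DIM('a)} Basis"
begin

definition vec_of :: "nat \<Rightarrow> (nat \<Rightarrow> real) \<Rightarrow> 'a" where
  "vec_of k h = (\<Sum>i<k. h i *\<^sub>R e i)"

lemma e_in_Basis: "i < DIM('a) \<Longrightarrow> e i \<in> Basis"
  using bij_e by (auto simp: bij_betw_def)

lemma inner_e:
  assumes "i < DIM('a)" and "j < DIM('a)"
  shows "e i \<bullet> e j = (if i = j then 1 else 0)"
proof -
  have "e i = e j \<longleftrightarrow> i = j"
    using assms bij_e by (auto simp: bij_betw_def dest: inj_onD)
  then show ?thesis
    using assms by (simp add: inner_Basis e_in_Basis)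
qed

lemma vec_eqI:
  assumes "\<And>i. i < DIM('a) \<Longrightarrow> u \<bullet> e i = v \<bullet> e i"
  shows "u = v"
proof (rule euclidean_eqI)
  fix b :: 'a assume "b \<in> Basis"
  then obtain i where "i < DIM('a)" "b = e i"
    using bij_e by (auto simp: bij_betw_def)
  then show "u \<bullet> b = v \<bullet> b"
    using assms by simp
qed

lemma inner_vec_of:
  assumes "k \<le> DIM('a)" and "i < DIM('a)"
  shows "vec_of k h \<bullet> e i = (if i < k then h i else 0)"
proof -
  have "vec_of k h \<bullet> e i = (\<Sum>i'<k. h i' * (if i' = i then 1 else 0))"
    unfolding vec_of_def inner_sum_left using assms by (intro sum.cong) (auto simp: inner_e)
  then show ?thesis
    by (simp add: if_distrib sum.delta cong: if_cong)
qed

lemma inner_vec_of_vec_of: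
  assumes "k \<le> DIM('a)"
  shows "vec_of k u \<bullet> vec_of k v = (\<Sum>i<k. u i * v i)"
  unfolding vec_of_def [of k u] inner_sum_left
  using assms by (intro sum.cong) (auto simp: inner_commute [of "e _"] inner_vec_of)

lemma vec_of_cong: "(\<And>i. i < k \<Longrightarrow> h i = h' i) \<Longrightarrow> vec_of k h = vec_of k h'"
  unfolding vec_of_def by (intro sum.cong) auto

lemma vec_of_add: "vec_of k (\<lambda>i. u i + v i) = vec_of k u + vec_of k v"
  unfolding vec_of_def by (simp add: scaleR_add_left sum.distrib)

lemma vec_of_scale: "vec_of k (\<lambda>i. r * u i) = r *\<^sub>R vec_of k u"
  unfolding vec_of_def by (simp add: scaleR_sum_right)

lemma relu_vec_vec_of:
  assumes "k \<le> DIM('a)"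
  shows "relu_vec (vec_of k h) = vec_of k (\<lambda>i. relu (h i))"
  using assms by (intro vec_eqI) (simp add: inner_relu_vec e_in_Basis inner_vec_of relu_def)

end

(* Hidden widths are at most DIM('a), so the output of each hidden layer is embedded into 'a
   through e and every layer becomes a map from 'a to 'a. *)
locale narrow_relu_step_net = basis_enumeration e
  for e :: "nat \<Rightarrow> 'a::euclidean_space" +
  fixes L :: nat and d :: "nat \<Rightarrow> nat" and A :: "nat \<Rightarrow> 'a" and a :: "nat \<Rightarrow> real"
    and W :: "nat \<Rightarrow> nat \<Rightarrow> nat \<Rightarrow> real" and c :: "nat \<Rightarrow> nat \<Rightarrow> real"
    and s :: "nat \<Rightarrow> nat \<Rightarrow> bool"
  assumes narrow: "1 \<le> k \<Longrightarrow> k < L \<Longrightarrow> d k \<le> DIM('a)"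
begin

definition layer_input :: "nat \<Rightarrow> 'a \<Rightarrow> 'a" where
  "layer_input m x = (if m \<le> 1 then x else vec_of (d (m - 1)) (hidden d A a W c s (m - 1) x))"

definition weight_vec :: "nat \<Rightarrow> nat \<Rightarrow> 'a" where
  "weight_vec m j = (if m \<le> 1 then A j else vec_of (d (m - 1)) (W m j))"

definition bias :: "nat \<Rightarrow> nat \<Rightarrow> real" where
  "bias m j = (if m \<le> 1 then a j else c m j)"

definition preact :: "nat \<Rightarrow> 'a \<Rightarrow> nat \<Rightarrow> real" where
  "preact m z j = weight_vec m j \<bullet> z + bias m j"

definition layer_out :: "nat \<Rightarrow> 'a \<Rightarrow> nat \<Rightarrow> real" where
  "layer_out m z = (\<lambda>j\<in>{..<d m}. activ (s m j) (preact m z j))"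

definition layer_value :: "nat \<Rightarrow> 'a \<Rightarrow> nat \<Rightarrow> real" where
  "layer_value m x = (\<lambda>j\<in>{..<d m}. hidden d A a W c s m x j)"

definition layer_affine :: "nat \<Rightarrow> 'a \<Rightarrow> 'a" where
  "layer_affine m z = vec_of (d m) (preact m z)"

definition layer_injective :: "nat \<Rightarrow> bool" where
  "layer_injective m \<longleftrightarrow> (\<forall>w. (\<forall>j<d m. weight_vec m j \<bullet> w = 0) \<longrightarrow> w = 0)"

definition injective_relu_layer :: "nat \<Rightarrow> bool" where
  "injective_relu_layer m \<longleftrightarrow> layer_injective m \<and> (\<forall>j<d m. \<not> s m j)"

lemma hidden_eq_preact:
  assumes "1 \<le> m" and "m \<le> L"
  shows "hidden d A a W c s m x j = activ (s m j) (preact m (layer_input m x) j)"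
proof (cases "m = 1")
  case True
  then show ?thesis
    by (simp add: preact_def weight_vec_def bias_def layer_input_def)
next
  case False
  with assms(1) have "\<exists>k. m = Suc (Suc k)"
    by presburger
  then obtain k where m: "m = Suc (Suc k)"
    by blast
  then have "d (Suc k) \<le> DIM('a)"
    using assms(2) by (intro narrow) auto
  then show ?thesis
    using m by (simp add: preact_def weight_vec_def bias_def layer_input_def inner_vec_of_vec_of)
qed

lemma layer_value_eq_layer_out:
  assumes "1 \<le> m" and "m \<le> L"
  shows "layer_value m x = layer_out m (layer_input m x)"
  unfolding layer_value_def layer_out_def using hidden_eq_preact [OF assms] by (intro restrict_ext) auto

lemma layer_value_Suc_eq:
  assumes "1 \<le> m" and "layer_value m z = layer_value m x"
  shows "layer_value (Suc m) z = layer_value (Suc m) x"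
proof -
  obtain k where m: "m = Suc k"
    using assms(1) by (cases m) auto
  have "hidden d A a W c s m z i = hidden d A a W c s m x i" if "i < d m" for i
    using assms(2) that unfolding layer_value_def by (metis lessThan_iff restrict_apply')
  then have "(\<Sum>i<d m. W (Suc m) j i * hidden d A a W c s m z i)
      = (\<Sum>i<d m. W (Suc m) j i * hidden d A a W c s m x i)" for j
    by (intro sum.cong) auto
  then show ?thesis
    unfolding layer_value_def m by (intro restrict_ext) simp
qed

lemma layer_value_eq_propagate:
  assumes "1 \<le> m" and "m \<le> n" and "layer_value m z = layer_value m x"
  shows "layer_value n z = layer_value n x"
  using assms(2,1,3) by (induction n rule: dec_induct) (auto intro: layer_value_Suc_eq)

lemma net_eq_if_layer_value_eq:
  assumes "layer_value (L - 1) z = layer_value (L - 1) x"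
  shows "net L d A a W c s V v z = net L d A a W c s V v x"
proof -
  have "hidden d A a W c s (L - 1) z i = hidden d A a W c s (L - 1) x i" if "i < d (L - 1)" for i
    using assms that unfolding layer_value_def by (metis lessThan_iff restrict_apply')
  then have "(\<Sum>i<d (L - 1). hidden d A a W c s (L - 1) z i *\<^sub>R V i)
      = (\<Sum>i<d (L - 1). hidden d A a W c s (L - 1) x i *\<^sub>R V i)"
    by (intro sum.cong) auto
  then show ?thesis
    by (simp add: net_def)
qed

lemma inner_layer_affine:
  assumes "1 \<le> m" and "m < L" and "i < d m"
  shows "layer_affine m z \<bullet> e i = preact m z i"
  using assms narrow [OF assms(1,2)] by (simp add: layer_affine_def inner_vec_of)

lemma lifts_unbounded_layer_affine:
  assumes "1 \<le> m" and "m < L" and "layer_injective m"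
  shows "lifts_unbounded (layer_affine m) z"
proof -
  define f where "f w = vec_of (d m) (\<lambda>j. weight_vec m j \<bullet> w)" for w
  have "linear f"
    by (rule linearI) (simp_all add: f_def inner_add_right vec_of_add vec_of_scale)
  moreover have "inj f"
    unfolding linear_injective_0 [OF \<open>linear f\<close>]
  proof (intro allI impI)
    fix w assume "f w = 0"
    then have "weight_vec m j \<bullet> w = 0" if "j < d m" for j
      using that narrow [OF assms(1,2)] inner_vec_of [of "d m" j "\<lambda>j. weight_vec m j \<bullet> w"]
      by (simp add: f_def)
    then show "w = 0"
      using assms(3) unfolding layer_injective_def by blast
  qed
  moreover have "layer_affine m = (\<lambda>w. f w + vec_of (d m) (bias m))"
    unfolding layer_affine_def f_def vec_of_add [symmetric]
    by (intro ext vec_of_cong) (simp add: preact_def)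
  ultimately show ?thesis
    using lifts_unbounded_affine by metis
qed

lemma layer_input_Suc:
  assumes "1 \<le> m" and "m < L" and "\<forall>j<d m. \<not> s m j"
  shows "layer_input (Suc m) x = relu_vec (layer_affine m (layer_input m x))"
proof -
  have "layer_input (Suc m) x = vec_of (d m) (hidden d A a W c s m x)"
    using assms(1) by (simp add: layer_input_def)
  also have "\<dots> = vec_of (d m) (\<lambda>j. relu (preact m (layer_input m x) j))"
    using assms by (intro vec_of_cong) (simp add: hidden_eq_preact activ_def)
  also have "\<dots> = relu_vec (layer_affine m (layer_input m x))"
    using narrow [OF assms(1,2)] by (simp add: layer_affine_def relu_vec_vec_of)
  finally show ?thesis .
qed

lemma lifts_unbounded_layer_input:
  assumes "1 \<le> m" and "m \<le> L" and "\<And>k. 1 \<le> k \<Longrightarrow> k < m \<Longrightarrow> injective_relu_layer k"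
  shows "lifts_unbounded (layer_input m) x"
  using assms
proof (induction m arbitrary: x rule: dec_induct)
  case base
  then show ?case
    by (simp add: layer_input_def lifts_unbounded_def) blast
next
  case (step k)
  then have k: "1 \<le> k" "k < L" "injective_relu_layer k"
    by auto
  then have "layer_input (Suc k) = relu_vec \<circ> (layer_affine k \<circ> layer_input k)"
    by (simp add: fun_eq_iff layer_input_Suc injective_relu_layer_def)
  moreover have "lifts_unbounded (layer_affine k \<circ> layer_input k) x"
    using k step.IH step.prems
    by (intro lifts_unbounded_comp lifts_unbounded_layer_affine) (auto simp: injective_relu_layer_def)
  ultimately show ?case
    using lifts_unbounded_comp lifts_unbounded_relu_vec by metis
qed

lemma level_unbounded_at_layer_out_kernel:
  assumes "w \<noteq> 0" and "\<forall>j<d m. weight_vec m j \<bullet> w = 0"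
  shows "level_unbounded_at (layer_out m) z"
  unfolding level_unbounded_at_def
proof (intro exI conjI)
  show "\<forall>q\<in>ray z w. layer_out m q = layer_out m z"
    using assms(2) by (auto simp: ray_def layer_out_def preact_def inner_add_right intro!: restrict_ext)
qed (use assms(1) path_connected_ray unbounded_ray start_in_ray in auto)

lemma level_unbounded_at_layer_out_step:
  assumes m: "1 \<le> m" "m < L" and "layer_injective m" and j0: "j0 < d m" "s m j0"
  shows "level_unbounded_at (layer_out m) z"
proof -
  define F where "F y = (\<lambda>j\<in>{..<d m}. activ (s m j) (y \<bullet> e j))" for y
  have "layer_out m = F \<circ> layer_affine m"
    using m by (auto simp: fun_eq_iff F_def layer_out_def inner_layer_affine)
  moreover have "lifts_unbounded (layer_affine m) z"
    using m assms(3) by (rule lifts_unbounded_layer_affine)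
  moreover have "level_unbounded_at F (layer_affine m z)"
    unfolding level_unbounded_at_def
  proof (intro exI conjI)
    define \<sigma> :: real where "\<sigma> = (if preact m z j0 \<ge> 0 then 1 else -1)"
    have DIM: "j < d m \<Longrightarrow> j < DIM('a)" for j
      using narrow [OF m] by simp
    show "\<not> bounded (ray (layer_affine m z) (\<sigma> *\<^sub>R e j0))"
      using e_in_Basis [OF DIM [OF j0(1)]] by (intro unbounded_ray) (auto simp: \<sigma>_def)
    show "\<forall>q\<in>ray (layer_affine m z) (\<sigma> *\<^sub>R e j0). F q = F (layer_affine m z)"
    proof
      fix q assume "q \<in> ray (layer_affine m z) (\<sigma> *\<^sub>R e j0)"
      then obtain t where t: "t \<ge> 0" "q = layer_affine m z + (t * \<sigma>) *\<^sub>R e j0"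
        unfolding ray_def by auto
      have "q \<bullet> e j = layer_affine m z \<bullet> e j + (if j = j0 then t * \<sigma> else 0)" if "j < d m" for j
        using t(2) DIM [OF that] DIM [OF j0(1)] by (simp add: inner_add_left inner_e)
      moreover have "step (preact m z j0 + t * \<sigma>) = step (preact m z j0)"
        using t(1) by (simp add: step_def \<sigma>_def)
      ultimately show "F q = F (layer_affine m z)"
        unfolding F_def using j0 m by (intro restrict_ext) (simp add: inner_layer_affine activ_def)
    qed
  qed (simp_all add: path_connected_ray start_in_ray)
  ultimately show ?thesis
    using level_unbounded_at_comp by metis
qed

lemma level_unbounded_at_layer_out:
  assumes "1 \<le> m" and "m < L" and "\<not> injective_relu_layer m"
  shows "level_unbounded_at (layer_out m) z"
proof (cases "layer_injective m")
  case True
  then obtain j where "j < d m" "s m j"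
    using assms(3) unfolding injective_relu_layer_def by blast
  with assms(1,2) True show ?thesis
    by (rule level_unbounded_at_layer_out_step)
next
  case False
  then obtain w where "w \<noteq> 0" "\<forall>j<d m. weight_vec m j \<bullet> w = 0"
    unfolding layer_injective_def by blast
  then show ?thesis
    by (rule level_unbounded_at_layer_out_kernel)
qed

lemma level_unbounded_at_net:
  assumes "l \<in> {1..L - 1}" and "j < d l" and "s l j"
  shows "level_unbounded_at (net L d A a W c s V v) x"
proof -
  have "\<exists>m. 1 \<le> m \<and> \<not> injective_relu_layer m"
    using assms by (auto simp: injective_relu_layer_def)
  then obtain m where m: "1 \<le> m" "\<not> injective_relu_layer m"
    and below: "\<And>k. k < m \<Longrightarrow> \<not> (1 \<le> k \<and> \<not> injective_relu_layer k)"
    unfolding exists_least_iff [of "\<lambda>m. 1 \<le> m \<and> \<not> injective_relu_layer m"] by blast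
  have "m \<le> l"
    using below [of l] assms by (force simp: injective_relu_layer_def)
  then have "m < L"
    using assms(1) by auto
  have "lifts_unbounded (layer_input m) x"
    using m(1) \<open>m < L\<close> below by (intro lifts_unbounded_layer_input) auto
  moreover have "level_unbounded_at (layer_out m) (layer_input m x)"
    using m \<open>m < L\<close> by (intro level_unbounded_at_layer_out)
  ultimately have "level_unbounded_at (layer_out m \<circ> layer_input m) x"
    by (rule level_unbounded_at_comp)
  also have "layer_out m \<circ> layer_input m = layer_value m"
    using m(1) \<open>m < L\<close> by (simp add: fun_eq_iff layer_value_eq_layer_out)
  finally have "level_unbounded_at (layer_value (L - 1)) x"
  proof (rule level_unbounded_at_mono)
    show "layer_value (L - 1) z = layer_value (L - 1) x" if "layer_value m z = layer_value m x" for z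
      using \<open>m < L\<close> by (intro layer_value_eq_propagate [OF m(1) _ that]) simp
  qed
  then show ?thesis
    by (rule level_unbounded_at_mono) (rule net_eq_if_layer_value_eq)
qed

end

theorem lemma15:
  fixes L :: nat and d :: "nat \<Rightarrow> nat"
    and A :: "nat \<Rightarrow> 'a::euclidean_space" and a :: "nat \<Rightarrow> real"
    and W :: "nat \<Rightarrow> nat \<Rightarrow> nat \<Rightarrow> real" and c :: "nat \<Rightarrow> nat \<Rightarrow> real"
    and s :: "nat \<Rightarrow> nat \<Rightarrow> bool"
    and V :: "nat \<Rightarrow> 'b::euclidean_space" and v :: 'b
    and y :: 'b and C :: "'a set"
  assumes "L \<ge> 2"
    and "width L d = DIM('a)"
    and "\<exists>l\<in>{1..L - 1}. \<exists>j<d l. s l j"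
    and "C \<in> components (net L d A a W c s V v -` {y})"
  shows "\<not> bounded C"
proof -
  (* The hypothesis L \<ge> 2 is implied by the third one. *)
  obtain e :: "nat \<Rightarrow> 'a" where "bij_betw e {..<DIM('a)} Basis"
    using ex_bij_betw_nat_finite [OF finite_Basis] by (auto simp: atLeast0LessThan)
  moreover have "d k \<le> DIM('a)" if "1 \<le> k" "k < L" for k
    using assms(2) that Max_ge [of "d ` {1..L - 1}" "d k"] unfolding width_def by auto
  ultimately interpret narrow_relu_step_net e L d A a W c s
    by unfold_locales
  obtain x where x: "net L d A a W c s V v x = y"
    and C: "C = connected_component_set (net L d A a W c s V v -` {y}) x"
    using assms(4) by (auto simp: components_iff)
  have "level_unbounded_at (net L d A a W c s V v) x"
    using assms(3) level_unbounded_at_net by blast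
  then show ?thesis
    unfolding C x [symmetric] by (rule unbounded_connected_component_level_set)
qed

end
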